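(* Let $G=(X,\Sigma,\longrightarrow,X_0)$ and $R=(Z,\Sigma,\longrightarrow,Z_0)$ be automata, $E$ a $\Sigma_{ucr}$-controllability set from $G$ to $R$, and $\mathcal{A}(E)=(E^*,\Sigma,\longrightarrow,I_E)$. Then for any $s\in\Sigma^*$, $W_0\in I_E$ and $W\in E^*$, if $W_0\xrightarrow{s}W$ in $\mathcal{A}(E)$ then $\pi_G(W)=\mathit{Reach}(s,X_0)$, where $\pi_G(W)=\{x\in X:(x,z)\in W\text{ for some }z\in Z\}$ and $\mathit{Reach}(s,X_0)=\{x\in X:x_0\xrightarrow{s}x\text{ for some }x_0\in X_0\}$.
   Context: An automaton is a 4-tuple $A=(Q,\Sigma,\longrightarrow,Q_0)$ with state set $Q$, finite event set $\Sigma$, ${\longrightarrow}\subseteq Q\times\Sigma\times Q$ and $\emptyset\neq Q_0\subseteq Q$; write $q\xrightarrow{\sigma}q'$ for $(q,\sigma,q')\in{\longrightarrow}$, extended to strings $s\in\Sigma^*$ in the usual way. Events are partitioned into uncontrollable $\Sigma_{uc}$ and controllable $\Sigma_c$; $\Sigma_r\subseteq\Sigma$ is a fixed set of required events. For $W,W'\subseteq X\times Z$, $\sigma\in\Sigma$: $\mathit{match}_{G,R}(W,\sigma,W')$ iff for all $(x,z)\in W$ and $x\xrightarrow{\sigma}x'$ there is $z'$ with $z\xrightarrow{\sigma}z'$ and $(x',z')\in W'$. $E\subseteq\wp(X\times Z)$ is a $\Sigma_{ucr}$-controllability set from $G$ to $R$ if: (istate) some $W_0\in E$ satisfies $\forall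 x_0\in X_0\,\exists z_0\in Z_0\,((x_0,z_0)\in W_0)$; (a) for every $W\in E$, $\sigma\in\Sigma_{uc}$ there is $W'\in E$ with $\mathit{match}_{G,R}(W,\sigma,W')$; (b) for every $W\in E$, $(x,z)\in W$, $\sigma\in\Sigma_r$, $z\xrightarrow{\sigma}z'$, there exist $x'$ and $W'\in E$ with $x\xrightarrow{\sigma}x'$, $(x',z')\in W'$, $\mathit{match}_{G,R}(W,\sigma,W')$. For such $E$, $E^*=\bigcup_{\widetilde W\in E}\wp(\widetilde W)$, $\mathrm{Succ}_\sigma(W)=\bigcup_{(x,z)\in W}\{x':x\xrightarrow{\sigma}x'\}\times\{z':z\xrightarrow{\sigma}z'\}$, and $\mathcal{A}(E)=(E^*,\Sigma,\longrightarrow,I_E)$ with $I_E=\{W_0\in E^*:\forall x_0\in X_0\,\exists z_0\in Z_0\,((x_0,z_0)\in W_0)\text{ and }W_0\subseteq X_0\times Z_0\}$ and $W\xrightarrow{\sigma}W'$ iff (i) there exist $(x,z)\in W$, $(x',z')\in W'$ with $x\xrightarrow{\sigma}x'$, $z\xrightarrow{\sigma}z'$; (ii) $\mathit{match}_{G,R}(W,\sigma,W')$; (iii) $W'\subseteq\mathrm{Succ}_\sigma(W)$. *)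

theory Defs
  imports Main
begin

record ('q, 'e) automaton =
  states :: "'q set"
  trans  :: "('q \<times> 'e \<times> 'q) set"
  init   :: "'q set"

definition is_automaton :: "'e set \<Rightarrow> ('q, 'e) automaton \<Rightarrow> bool" where
  "is_automaton Sig A \<longleftrightarrow> finite Sig \<and> trans A \<subseteq> states A \<times> Sig \<times> states A
     \<and> init A \<noteq> {} \<and> init A \<subseteq> states A"

fun steps :: "('q \<times> 'e \<times> 'q) set \<Rightarrow> 'q \<Rightarrow> 'e list \<Rightarrow> 'q \<Rightarrow> bool" where
  "steps T q [] q' \<longleftrightarrow> q = q'"
| "steps T q (a # s) q' \<longleftrightarrow> (\<exists>q''. (q, a, q'') \<in> T \<and> steps T q'' s q')"

definition match :: "('x, 'e) automaton \<Rightarrow> ('z, 'e) automaton \<Rightarrow> ('x \<times> 'z) set \<Rightarrow> 'e \<Rightarrow> ('x \<times> 'z) set \<Rightarrow> bool" where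
  "match G R W \<sigma> W' \<longleftrightarrow>
     (\<forall>(x, z) \<in> W. \<forall>x'. (x, \<sigma>, x') \<in> trans G \<longrightarrow> (\<exists>z'. (z, \<sigma>, z') \<in> trans R \<and> (x', z') \<in> W'))"

definition ctrl_set ::
  "'e set \<Rightarrow> 'e set \<Rightarrow> 'e set \<Rightarrow> ('x, 'e) automaton \<Rightarrow> ('z, 'e) automaton \<Rightarrow> ('x \<times> 'z) set set \<Rightarrow> bool" where
  "ctrl_set Sig Sig_uc Sig_r G R E \<longleftrightarrow>
     E \<subseteq> Pow (states G \<times> states R) \<and>
     (\<exists>W0 \<in> E. \<forall>x0 \<in> init G. \<exists>z0 \<in> init R. (x0, z0) \<in> W0) \<and>
     (\<forall>W \<in> E. \<forall>\<sigma> \<in> Sig_uc. \<exists>W' \<in> E. match G R W \<sigma> W') \<and>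
     (\<forall>W \<in> E. \<forall>(x, z) \<in> W. \<forall>\<sigma> \<in> Sig_r. \<forall>z'. (z, \<sigma>, z') \<in> trans R \<longrightarrow>
        (\<exists>x'. \<exists>W' \<in> E. (x, \<sigma>, x') \<in> trans G \<and> (x', z') \<in> W' \<and> match G R W \<sigma> W'))"

definition E_star :: "('x \<times> 'z) set set \<Rightarrow> ('x \<times> 'z) set set" where
  "E_star E = (\<Union>W \<in> E. Pow W)"

definition Succ :: "('x, 'e) automaton \<Rightarrow> ('z, 'e) automaton \<Rightarrow> 'e \<Rightarrow> ('x \<times> 'z) set \<Rightarrow> ('x \<times> 'z) set" where
  "Succ G R \<sigma> W = (\<Union>(x, z) \<in> W. {x'. (x, \<sigma>, x') \<in> trans G} \<times> {z'. (z, \<sigma>, z') \<in> trans R})"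

definition AE :: "'e set \<Rightarrow> ('x, 'e) automaton \<Rightarrow> ('z, 'e) automaton \<Rightarrow> ('x \<times> 'z) set set
                   \<Rightarrow> (('x \<times> 'z) set, 'e) automaton" where
  "AE Sig G R E = \<lparr> states = E_star E,
     trans = {(W, \<sigma>, W'). W \<in> E_star E \<and> \<sigma> \<in> Sig \<and> W' \<in> E_star E \<and>
        (\<exists>(x, z) \<in> W. \<exists>(x', z') \<in> W'. (x, \<sigma>, x') \<in> trans G \<and> (z, \<sigma>, z') \<in> trans R) \<and>
        match G R W \<sigma> W' \<and> W' \<subseteq> Succ G R \<sigma> W},
     init = {W0 \<in> E_star E. (\<forall>x0 \<in> init G. \<exists>z0 \<in> init R. (x0, z0) \<in> W0) \<and> W0 \<subseteq> init G \<times> init R} \<rparr>"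

definition piG :: "('x, 'e) automaton \<Rightarrow> ('x \<times> 'z) set \<Rightarrow> 'x set" where
  "piG G W = {x \<in> states G. \<exists>z. (x, z) \<in> W}"

definition Reach :: "('x, 'e) automaton \<Rightarrow> 'e list \<Rightarrow> 'x set \<Rightarrow> 'x set" where
  "Reach G s X0 = {x \<in> states G. \<exists>x0 \<in> X0. steps (trans G) x0 s x}"

end

theory Submission
  imports Defs
begin

text \<open>A transition \<open>W \<rightarrow>\<^sub>\<sigma> W'\<close> of \<open>\<A>(E)\<close> projects onto the one-step \<open>\<sigma>\<close>-successors in \<open>G\<close> of
  the projection of \<open>W\<close>: condition (iii), \<open>W' \<subseteq> Succ\<^sub>\<sigma>(W)\<close>, gives one inclusion and the match
  condition (ii) the other. Induction on \<open>s\<close> then propagates \<open>\<pi>\<^sub>G(W\<^sub>0) = X\<^sub>0\<close> along the run.\<close>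

lemma Reach_Cons:
  assumes "trans G \<subseteq> states G \<times> UNIV \<times> states G"
  shows "Reach G (a # s) X = Reach G s (Reach G [a] X)"
  using assms by (auto simp: Reach_def)

lemma piG_AE_trans:
  assumes "trans G \<subseteq> states G \<times> UNIV \<times> states G"
    and "(W, a, W') \<in> trans (AE Sig G R E)"
  shows "piG G W' = Reach G [a] (piG G W)"
proof
  have "match G R W a W'" and "W' \<subseteq> Succ G R a W"
    using assms(2) by (auto simp: AE_def)
  show "piG G W' \<subseteq> Reach G [a] (piG G W)"
  proof
    fix x' assume "x' \<in> piG G W'"
    then obtain z' where "(x', z') \<in> W'" "x' \<in> states G"
      by (auto simp: piG_def)
    with \<open>W' \<subseteq> Succ G R a W\<close> obtain x z where "(x, z) \<in> W" "(x, a, x') \<in> trans G"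
      by (auto simp: Succ_def)
    with assms(1) \<open>x' \<in> states G\<close> show "x' \<in> Reach G [a] (piG G W)"
      by (auto simp: piG_def Reach_def)
  qed
  show "Reach G [a] (piG G W) \<subseteq> piG G W'"
  proof
    fix x' assume "x' \<in> Reach G [a] (piG G W)"
    then obtain x z where "x' \<in> states G" "(x, z) \<in> W" "(x, a, x') \<in> trans G"
      by (auto simp: piG_def Reach_def)
    with \<open>match G R W a W'\<close> obtain z' where "(x', z') \<in> W'"
      unfolding match_def by blast
    with \<open>x' \<in> states G\<close> show "x' \<in> piG G W'"
      by (auto simp: piG_def)
  qed
qed

lemma piG_AE_steps:
  assumes "trans G \<subseteq> states G \<times> UNIV \<times> states G"
    and "steps (trans (AE Sig G R E)) W0 s W"
  shows "piG G W = Reach G s (piG G W0)"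
  using assms(2)
proof (induction s arbitrary: W0)
  case Nil
  then show ?case by (auto simp: Reach_def piG_def)
next
  case (Cons a s)
  then obtain W1 where step: "(W0, a, W1) \<in> trans (AE Sig G R E)"
    and run: "steps (trans (AE Sig G R E)) W1 s W"
    by (meson steps.simps(2))
  have "piG G W = Reach G s (piG G W1)"
    using Cons.IH[OF run] .
  also have "piG G W1 = Reach G [a] (piG G W0)"
    using piG_AE_trans[OF assms(1) step] .
  also have "Reach G s (Reach G [a] (piG G W0)) = Reach G (a # s) (piG G W0)"
    using Reach_Cons[OF assms(1)] by (rule sym)
  finally show ?case .
qed

lemma piG_AE_init:
  assumes "init G \<subseteq> states G" and "W0 \<in> init (AE Sig G R E)"
  shows "piG G W0 = init G"
  using assms by (auto simp: AE_def piG_def)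

theorem lemma2:
  fixes G :: "('x, 'e) automaton" and R :: "('z, 'e) automaton"
    and Sig Sig_uc Sig_c Sig_r :: "'e set"
  assumes "is_automaton Sig G" and "is_automaton Sig R"
    and "Sig_uc \<inter> Sig_c = {}" and "Sig_uc \<union> Sig_c = Sig" and "Sig_r \<subseteq> Sig"
    and "ctrl_set Sig Sig_uc Sig_r G R E"
    and "set s \<subseteq> Sig"
    and "W0 \<in> init (AE Sig G R E)" and "W \<in> E_star E"
    and "steps (trans (AE Sig G R E)) W0 s W"
  shows "piG G W = Reach G s (init G)"
proof -
  have trans_G: "trans G \<subseteq> states G \<times> UNIV \<times> states G"
    and init_G: "init G \<subseteq> states G"
    using assms(1) by (auto simp: is_automaton_def)
  have "piG G W = Reach G s (piG G W0)"
    using piG_AE_steps[OF trans_G assms(10)] .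
  also have "piG G W0 = init G"
    using piG_AE_init[OF init_G assms(8)] .
  finally show ?thesis .
qed

end
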